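(* Let $p$ be a prime. For integers $s,j\ge1$ with $p\nmid s$, let $\rho_{s,j}$ be the unique root of $X^2-sX+p^j$ which is a $p$-adic unit (with respect to the fixed embedding $\bar{\mathbb Q}\hookrightarrow\bar{\mathbb Q}_p$). Let $\mathbf e=\{e(s,j)\}$ be a nonempty finite collection of positive integers indexed by pairs $(s,j)$ of integers with $s,j\ge1$, $p\nmid s$ and $1\le s<2p^{j/2}$. Then $\rho_{\mathbf e}:=\prod_{s,j}\rho_{s,j}^{e(s,j)}$ is not a root of unity.
   Context: A fixed embedding $\bar{\mathbb Q}\hookrightarrow\bar{\mathbb Q}_p$ is used to decide which root of $X^2-sX+p^j$ is a $p$-adic unit. *)

theory Defs
  imports Complex_Main "HOL-Computational_Algebra.Computational_Algebra"
begin

text \<open>We model the algebraic closure of Q as the algebraic complex numbers.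
  A fixed embedding of it into an algebraic closure of Q_p is recorded through
  the induced absolute value nu on the algebraic numbers: a non-archimedean
  absolute value extending the normalised p-adic absolute value of Q.
  (Every such absolute value arises from an embedding and conversely.)\<close>

definition padic_place :: "nat \<Rightarrow> (complex \<Rightarrow> real) \<Rightarrow> bool" where
  "padic_place p nu \<longleftrightarrow>
     (\<forall>x. algebraic x \<longrightarrow> nu x \<ge> 0 \<and> (nu x = 0 \<longleftrightarrow> x = 0)) \<and>
     (\<forall>x y. algebraic x \<longrightarrow> algebraic y \<longrightarrow>
         nu (x * y) = nu x * nu y \<and> nu (x + y) \<le> max (nu x) (nu y)) \<and>
     (\<forall>n::int. n \<noteq> 0 \<longrightarrow>
         nu (of_int n) = real p powr (- real (multiplicity (int p) n)))"

text \<open>The root of X^2 - sX + p^j which is a p-adic unit (unique when p does not divide s).\<close>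
definition unit_root :: "nat \<Rightarrow> (complex \<Rightarrow> real) \<Rightarrow> nat \<Rightarrow> nat \<Rightarrow> complex" where
  "unit_root p nu s j =
     (THE z. z\<^sup>2 - of_nat s * z + of_nat p ^ j = 0 \<and> nu z = 1)"

definition root_of_unity :: "complex \<Rightarrow> bool" where
  "root_of_unity z \<longleftrightarrow> (\<exists>n::nat. n > 0 \<and> z ^ n = 1)"

end

theory Submission
  imports Defs
begin

text \<open>The p-adic condition only serves to single out one of the two roots of
  X^2 - sX + p^j; the argument is archimedean. Since s^2 < 4p^j, the two roots are
  complex conjugates with product p^j, so each has complex absolute value p^(j/2) > 1.
  Hence the product has absolute value > 1 and cannot be a root of unity.\<close>

lemma padic_place_mult:
  "padic_place p nu \<Longrightarrow> algebraic x \<Longrightarrow> algebraic y \<Longrightarrow> nu (x * y) = nu x * nu y"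
  unfolding padic_place_def by blast

lemma padic_place_add_le:
  "padic_place p nu \<Longrightarrow> algebraic x \<Longrightarrow> algebraic y \<Longrightarrow> nu (x + y) \<le> max (nu x) (nu y)"
  unfolding padic_place_def by blast

lemma padic_place_of_int:
  "padic_place p nu \<Longrightarrow> n \<noteq> 0 \<Longrightarrow>
     nu (of_int n) = real p powr (- real (multiplicity (int p) n))"
  unfolding padic_place_def by blast

lemma padic_place_of_int_coprime:
  assumes "padic_place p nu" "p > 0" "n \<noteq> 0" "\<not> int p dvd n"
  shows "nu (of_int n) = 1"
  using padic_place_of_int[OF assms(1,3)] assms(2,4) by (simp add: not_dvd_imp_multiplicity_0)

lemma padic_place_minus_one:
  assumes "padic_place p nu" "p > 0"
  shows "nu (- 1) = 1"
  using padic_place_of_int[OF assms(1), of "- 1"] assms(2) by (simp add: multiplicity_unit_right)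

lemma padic_place_minus:
  assumes "padic_place p nu" "p > 0" "algebraic x"
  shows "nu (- x) = nu x"
proof -
  have "nu (- x) = nu (- 1) * nu x"
    using padic_place_mult[OF assms(1) _ assms(3), of "- 1"] by simp
  moreover have "nu (- 1) = 1" using padic_place_minus_one[OF assms(1,2)] .
  ultimately show ?thesis by simp
qed

lemma padic_place_prime_power:
  assumes "padic_place p nu" "prime p"
  shows "nu (of_nat p ^ j) = real p powr (- real j)"
proof -
  have "multiplicity (int p) (int p ^ j) = j"
    using assms(2) by (intro multiplicity_prime_power) (simp add: prime_elem_nat_iff)
  moreover have "p > 0" using assms(2) prime_gt_0_nat by blast
  ultimately show ?thesis
    using padic_place_of_int[OF assms(1), of "int p ^ j"] by simp
qed

lemma padic_place_unit_iff_other_nonunit: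
  assumes nu: "padic_place p nu" "p > 0"
    and alg: "algebraic z1" "algebraic z2" and alg_sum: "algebraic (z1 + z2)"
    and sum: "nu (z1 + z2) = 1" and prod: "nu (z1 * z2) < 1"
  shows "nu z1 = 1 \<longleftrightarrow> nu z2 \<noteq> 1"
proof -
  have bound: "nu x \<le> max 1 (nu y)" if "nu (x + y) = 1" "algebraic (x + y)" "algebraic y" for x y
  proof -
    have "nu ((x + y) + - y) \<le> max (nu (x + y)) (nu (- y))"
      using that by (intro padic_place_add_le[OF nu(1)]) auto
    thus ?thesis using that padic_place_minus[OF nu] by simp
  qed
  have le1: "nu z1 \<le> max 1 (nu z2)" "nu z2 \<le> max 1 (nu z1)"
    using bound[of z1 z2] bound[of z2 z1] sum alg alg_sum by (simp_all add: add.commute)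
  have ge1: "1 \<le> max (nu z1) (nu z2)"
    using padic_place_add_le[OF nu(1) alg] sum by simp
  have lt1: "nu z1 * nu z2 < 1"
    using prod padic_place_mult[OF nu(1) alg] by simp
  have nonneg: "nu z1 \<ge> 0" "nu z2 \<ge> 0"
    using nu(1) alg unfolding padic_place_def by blast+
  show ?thesis
  proof (cases "nu z1 > 1 \<or> nu z2 > 1")
    case True
    with le1 have "nu z1 > 1 \<and> nu z2 > 1" by auto
    with lt1 show ?thesis by (metis less_1_mult not_less_iff_gr_or_eq)
  next
    case False
    with le1 ge1 lt1 nonneg show ?thesis by (auto simp: max_def split: if_splits)
  qed
qed

lemma quadratic_factor:
  fixes s q :: complex
  obtains z1 z2 where "z1 + z2 = s" "z1 * z2 = q"
proof
  define w where "w = csqrt (s\<^sup>2 - 4 * q)"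
  show "(s + w) / 2 + (s - w) / 2 = s" by (simp add: field_simps)
  have "(s + w) * (s - w) = s\<^sup>2 - w\<^sup>2" by (simp add: algebra_simps power2_eq_square)
  thus "(s + w) / 2 * ((s - w) / 2) = q" by (simp add: w_def)
qed

lemma quadratic_roots_iff:
  fixes z1 z2 z :: "'a::idom"
  shows "z\<^sup>2 - (z1 + z2) * z + z1 * z2 = 0 \<longleftrightarrow> z = z1 \<or> z = z2"
proof -
  have "z\<^sup>2 - (z1 + z2) * z + z1 * z2 = (z - z1) * (z - z2)"
    by (simp add: algebra_simps power2_eq_square)
  thus ?thesis by simp
qed

lemma algebraic_root_of_quadratic:
  fixes z :: complex and s q :: nat
  assumes "z\<^sup>2 - of_nat s * z + of_nat q = 0"
  shows "algebraic z"
proof (rule algebraicI[of "[:of_nat q, - of_nat s, 1:]"])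
  show "poly [:of_nat q, - of_nat s, 1:] z = 0"
    using assms by (simp add: algebra_simps power2_eq_square)
qed (auto simp: coeff_pCons split: nat.splits)

lemma unit_root_is_root:
  assumes "prime p" "padic_place p nu" "\<not> p dvd s" "j \<ge> 1"
  defines "u \<equiv> unit_root p nu s j"
  shows "u\<^sup>2 - of_nat s * u + of_nat p ^ j = 0"
proof -
  have p0: "p > 0" using assms(1) prime_gt_0_nat by blast
  obtain z1 z2 :: complex where sum: "z1 + z2 = of_nat s" and prod: "z1 * z2 = of_nat p ^ j"
    using quadratic_factor .
  have roots: "z\<^sup>2 - of_nat s * z + of_nat p ^ j = 0 \<longleftrightarrow> z = z1 \<or> z = z2" for z
    using quadratic_roots_iff[of z z1 z2] by (simp add: sum prod)
  have alg: "algebraic z1" "algebraic z2"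
    using roots[of z1] roots[of z2] algebraic_root_of_quadratic[of _ s "p ^ j"] by auto
  have "nu (z1 + z2) = 1"
    using padic_place_of_int_coprime[OF assms(2) p0, of "int s"] assms(3) sum
    by (auto simp flip: of_nat_dvd_iff)
  moreover have "nu (z1 * z2) < 1"
    using prod padic_place_prime_power[OF assms(2,1)] assms(4) prime_gt_1_nat[OF assms(1)]
    by (simp add: powr_less_one)
  ultimately have "nu z1 = 1 \<longleftrightarrow> nu z2 \<noteq> 1"
    using padic_place_unit_iff_other_nonunit[OF assms(2) p0 alg] sum by simp
  hence "\<exists>!z. (z\<^sup>2 - of_nat s * z + of_nat p ^ j = 0) \<and> nu z = 1"
    unfolding roots by metis
  thus ?thesis unfolding u_def unit_root_def by (rule theI'[THEN conjunct1])
qed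

text \<open>A root of a real quadratic with negative discriminant is not real, so its
  conjugate is the other root and the product of the roots is its squared modulus.\<close>

lemma norm_root_of_quadratic_negative_discriminant:
  fixes z :: complex and s q :: real
  assumes root: "z\<^sup>2 - of_real s * z + of_real q = 0" and disc: "s\<^sup>2 < 4 * q"
  shows "(cmod z)\<^sup>2 = q"
proof -
  have "Im z \<noteq> 0"
  proof
    assume "Im z = 0"
    hence "(Re z)\<^sup>2 - s * Re z + q = 0"
      using arg_cong[OF root, of Re] by (simp add: power2_eq_square)
    hence "(2 * Re z - s)\<^sup>2 = s\<^sup>2 - 4 * q" by (simp add: algebra_simps power2_eq_square)
    with disc show False by (metis diff_less_0_iff_less not_less zero_le_power2)
  qed
  hence ne: "z \<noteq> cnj z" by (auto simp: complex_eq_iff)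
  have root_cnj: "(cnj z)\<^sup>2 - of_real s * cnj z + of_real q = 0"
    using arg_cong[OF root, of cnj] by simp
  have "(z - cnj z) * (z + cnj z - of_real s)
      = (z\<^sup>2 - of_real s * z + of_real q) - ((cnj z)\<^sup>2 - of_real s * cnj z + of_real q)"
    by (simp add: algebra_simps power2_eq_square)
  hence "(z - cnj z) * (z + cnj z - of_real s) = 0" by (simp only: root root_cnj diff_self)
  with ne have "z + cnj z = of_real s" by simp
  hence "cnj z = of_real s - z" by (simp add: eq_diff_eq add.commute)
  hence "complex_of_real ((cmod z)\<^sup>2) = z * (of_real s - z)"
    by (simp only: complex_norm_square)
  also have "\<dots> = of_real q"
    using root by (simp add: algebra_simps power2_eq_square add_eq_0_iff2)
  finally have "complex_of_real ((cmod z)\<^sup>2) = of_real q" .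
  thus ?thesis by (simp only: of_real_eq_iff)
qed

lemma norm_unit_root_gt_1:
  assumes "prime p" "padic_place p nu" "\<not> p dvd s" "j \<ge> 1"
    and "real s < 2 * real p powr (real j / 2)"
  shows "cmod (unit_root p nu s j) > 1"
proof -
  have p1: "real p > 1" using assms(1) prime_gt_1_nat by simp
  have "(2 * real p powr (real j / 2))\<^sup>2 = 4 * real p ^ j"
    using p1 by (simp add: power_mult_distrib powr_half_sqrt_powr powr_realpow)
  hence "(real s)\<^sup>2 < 4 * real p ^ j"
    using power_strict_mono[OF assms(5), of 2] by simp
  hence "(cmod (unit_root p nu s j))\<^sup>2 = real p ^ j"
    using unit_root_is_root[OF assms(1-4)]
    by (intro norm_root_of_quadratic_negative_discriminant[where s = "real s"]) simp_all
  moreover have "real p ^ j > 1" using p1 assms(4) by simp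
  ultimately show ?thesis
    by (metis norm_ge_zero power_le_one not_less zero_le_one)
qed

lemma norm_gt_1_imp_not_root_of_unity:
  "cmod z > 1 \<Longrightarrow> \<not> root_of_unity z"
  unfolding root_of_unity_def by (metis norm_one norm_power one_less_power less_irrefl)

theorem lemma2p3:
  fixes p :: nat and nu :: "complex \<Rightarrow> real"
    and E :: "(nat \<times> nat) set" and e :: "nat \<times> nat \<Rightarrow> nat"
  assumes "prime p"
    and "padic_place p nu"
    and "finite E" and "E \<noteq> {}"
    and "\<And>s j. (s, j) \<in> E \<Longrightarrow>
           1 \<le> s \<and> 1 \<le> j \<and> \<not> p dvd s \<and>
           real s < 2 * real p powr (real j / 2) \<and> e (s, j) > 0"
  shows "\<not> root_of_unity (\<Prod>(s, j)\<in>E. unit_root p nu s j ^ e (s, j))"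
proof (rule norm_gt_1_imp_not_root_of_unity)
  have "cmod (unit_root p nu s j ^ e (s, j)) > 1" if "(s, j) \<in> E" for s j
    using norm_unit_root_gt_1[OF assms(1,2)] assms(5)[OF that]
    by (simp add: norm_power one_less_power)
  hence "1 < (\<Prod>x\<in>E. cmod (case x of (s, j) \<Rightarrow> unit_root p nu s j ^ e (s, j)))"
    using assms(3,4) by (intro less_1_prod) auto
  thus "1 < cmod (\<Prod>(s, j)\<in>E. unit_root p nu s j ^ e (s, j))"
    by (simp add: prod_norm)
qed

end
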